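(* Let $H=(V,E)$ be a $3$-uniform quasi-eulerian hypergraph in which every vertex has odd degree. Then $|V|\le |E|$.
   Context: A hypergraph $H=(V,E)$ consists of a finite nonempty vertex set $V$, a finite edge set $E$ disjoint from $V$, and an incidence function assigning to each edge $e\in E$ a subset of $V$ (also denoted $e$); distinct edges may have the same vertex set. $H$ is $3$-uniform if $|e|=3$ for all $e\in E$. The degree of a vertex is the number of edges containing it. A walk is a sequence $W=v_0e_1v_1e_2\cdots e_kv_k$ with $v_i\in V$, $e_i\in E$, such that for each $i$, $v_{i-1}\ne v_i$ and $v_{i-1},v_i\in e_i$; the $v_i$ are its anchors. $W$ is closed if $k\ge 2$ and $v_0=v_k$; it is a strict trail if $e_1,\dots,e_k$ are pairwise distinct. An Euler family of $H$ is a family of closed strict trails such that every edge of $H$ lies in exactly one trail and no two trails have a common anchor; $H$ is quasi-eulerian if it has one. *)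

theory Defs
  imports Main
begin

text \<open>A hypergraph: vertex set V, edge set E (edges are of a separate type, hence
  disjoint from V), and an incidence function inc assigning to each edge a set of vertices.\<close>
definition hypergraph :: "'v set \<Rightarrow> 'e set \<Rightarrow> ('e \<Rightarrow> 'v set) \<Rightarrow> bool" where
  "hypergraph V E inc \<longleftrightarrow> finite V \<and> V \<noteq> {} \<and> finite E \<and> (\<forall>e\<in>E. inc e \<subseteq> V)"

definition uniform3 :: "'e set \<Rightarrow> ('e \<Rightarrow> 'v set) \<Rightarrow> bool" where
  "uniform3 E inc \<longleftrightarrow> (\<forall>e\<in>E. card (inc e) = 3)"

definition hdegree :: "'e set \<Rightarrow> ('e \<Rightarrow> 'v set) \<Rightarrow> 'v \<Rightarrow> nat" where
  "hdegree E inc v = card {e\<in>E. v \<in> inc e}"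

text \<open>A walk v0 e1 v1 ... ek vk is represented by the anchor list [v0,...,vk]
  and the edge list [e1,...,ek].\<close>
definition is_walk :: "'v set \<Rightarrow> 'e set \<Rightarrow> ('e \<Rightarrow> 'v set) \<Rightarrow> 'v list \<Rightarrow> 'e list \<Rightarrow> bool" where
  "is_walk V E inc vs es \<longleftrightarrow>
     length vs = length es + 1 \<and> set vs \<subseteq> V \<and> set es \<subseteq> E \<and>
     (\<forall>i < length es. vs ! i \<noteq> vs ! (i+1) \<and> vs ! i \<in> inc (es ! i) \<and> vs ! (i+1) \<in> inc (es ! i))"

definition closed_strict_trail :: "'v set \<Rightarrow> 'e set \<Rightarrow> ('e \<Rightarrow> 'v set) \<Rightarrow> 'v list \<Rightarrow> 'e list \<Rightarrow> bool" where
  "closed_strict_trail V E inc vs es \<longleftrightarrow>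
     is_walk V E inc vs es \<and> length es \<ge> 2 \<and> hd vs = last vs \<and> distinct es"

definition euler_family :: "'v set \<Rightarrow> 'e set \<Rightarrow> ('e \<Rightarrow> 'v set) \<Rightarrow> ('v list \<times> 'e list) set \<Rightarrow> bool" where
  "euler_family V E inc F \<longleftrightarrow>
     (\<forall>(vs, es)\<in>F. closed_strict_trail V E inc vs es) \<and>
     (\<forall>e\<in>E. \<exists>!W. W \<in> F \<and> e \<in> set (snd W)) \<and>
     (\<forall>W1\<in>F. \<forall>W2\<in>F. W1 \<noteq> W2 \<longrightarrow> set (fst W1) \<inter> set (fst W2) = {})"

definition quasi_eulerian :: "'v set \<Rightarrow> 'e set \<Rightarrow> ('e \<Rightarrow> 'v set) \<Rightarrow> bool" where
  "quasi_eulerian V E inc \<longleftrightarrow> (\<exists>F. euler_family V E inc F)"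

end

theory Submission
  imports Defs
begin

text \<open>Every edge of an Euler family is traversed exactly once, so exactly two of its three
  vertices are anchors of that traversal and one vertex is left over.  A closed trail, on the
  other hand, enters and leaves each of its anchors equally often, so every vertex is an anchor
  of an even number of edge traversals; hence a vertex of odd degree is the leftover vertex of
  at least one edge.  Each edge has exactly one leftover vertex, so there are at least as many
  edges as vertices.\<close>

lemma even_card_closed_walk_incidences:
  assumes "xs \<noteq> []" and "hd xs = last xs"
    and "\<forall>i. Suc i < length xs \<longrightarrow> xs ! i \<noteq> xs ! Suc i"
  shows "even (card {i. Suc i < length xs \<and> (xs ! i = v \<or> xs ! Suc i = v)})"
proof -
  define k where "k = length xs - 1"
  have len: "length xs = Suc k" using assms(1) by (simp add: k_def)
  define f :: "nat \<Rightarrow> nat" where "f i = of_bool (xs ! i = v)" for i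
  have "f k = f 0"
    using assms(1,2) len by (simp add: f_def hd_conv_nth last_conv_nth)
  then have shift: "(\<Sum>i<k. f (Suc i)) = (\<Sum>i<k. f i)"
    using sum.lessThan_Suc_shift[of f k] sum.lessThan_Suc[of f k] by simp
  have "card {i. Suc i < length xs \<and> (xs ! i = v \<or> xs ! Suc i = v)}
      = (\<Sum>i<k. of_bool (xs ! i = v \<or> xs ! Suc i = v))"
    by (subst sum_of_bool_eq) (auto simp: len intro!: arg_cong[where f = card])
  also have "\<dots> = (\<Sum>i<k. f i + f (Suc i))"
    using assms(3) len by (intro sum.cong) (auto simp: f_def)
  also have "\<dots> = 2 * (\<Sum>i<k. f i)"
    by (simp add: sum.distrib shift)
  finally show ?thesis by simp
qed

definition anchor_of :: "('v list \<times> 'e list) set \<Rightarrow> 'v \<Rightarrow> 'e \<Rightarrow> bool" where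
  "anchor_of F v e \<longleftrightarrow>
     (\<exists>(vs, es)\<in>F. \<exists>i < length es. es ! i = e \<and> (vs ! i = v \<or> vs ! Suc i = v))"

lemma euler_family_anchors_of_edge:
  assumes F: "euler_family V E inc F" and "e \<in> E"
  obtains u w where "u \<noteq> w" "u \<in> inc e" "w \<in> inc e" "{v. anchor_of F v e} = {u, w}"
proof -
  obtain vs es where W: "(vs, es) \<in> F" "e \<in> set es"
    and W_unique: "\<And>vs' es'. (vs', es') \<in> F \<Longrightarrow> e \<in> set es' \<Longrightarrow> (vs', es') = (vs, es)"
    using F \<open>e \<in> E\<close> unfolding euler_family_def by (metis prod.collapse snd_conv)
  have trail: "closed_strict_trail V E inc vs es"
    using F W(1) by (auto simp: euler_family_def)
  from W(2) obtain i where i: "i < length es" "es ! i = e" by (auto simp: in_set_conv_nth)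
  have "vs ! i \<noteq> vs ! Suc i" "vs ! i \<in> inc e" "vs ! Suc i \<in> inc e"
    using trail i by (auto simp: closed_strict_trail_def is_walk_def)
  moreover have "{v. anchor_of F v e} = {vs ! i, vs ! Suc i}"
  proof
    show "{vs ! i, vs ! Suc i} \<subseteq> {v. anchor_of F v e}"
      using W(1) i unfolding anchor_of_def by fastforce
  next
    show "{v. anchor_of F v e} \<subseteq> {vs ! i, vs ! Suc i}"
    proof
      fix v assume "v \<in> {v. anchor_of F v e}"
      then obtain vs' es' j where j: "(vs', es') \<in> F" "j < length es'" "es' ! j = e"
          "vs' ! j = v \<or> vs' ! Suc j = v"
        unfolding anchor_of_def by blast
      then have "(vs', es') = (vs, es)" using W_unique by (metis nth_mem)
      moreover have "distinct es" using trail by (simp add: closed_strict_trail_def)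
      ultimately have "j = i" using i j by (metis nth_eq_iff_index_eq prod.inject)
      then show "v \<in> {vs ! i, vs ! Suc i}" using j \<open>(vs', es') = (vs, es)\<close> by auto
    qed
  qed
  ultimately show thesis by (rule that)
qed

lemma euler_family_card_unanchored:
  assumes "euler_family V E inc F" and "e \<in> E" and "finite (inc e)"
  shows "card (inc e - {v. anchor_of F v e}) = card (inc e) - 2"
proof -
  obtain u w where "u \<noteq> w" "u \<in> inc e" "w \<in> inc e" "{v. anchor_of F v e} = {u, w}"
    using euler_family_anchors_of_edge assms(1,2) .
  then show ?thesis using assms(3) by (simp add: card_Diff_subset)
qed

lemma euler_family_anchored_edges_subset:
  assumes "euler_family V E inc F"
  shows "{e. anchor_of F v e} \<subseteq> {e \<in> E. v \<in> inc e}"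
proof
  fix e assume "e \<in> {e. anchor_of F v e}"
  then obtain vs es i where "(vs, es) \<in> F" "i < length es" "es ! i = e"
      "vs ! i = v \<or> vs ! Suc i = v"
    unfolding anchor_of_def by blast
  moreover from this have "is_walk V E inc vs es"
    using assms by (auto simp: euler_family_def closed_strict_trail_def)
  ultimately show "e \<in> {e \<in> E. v \<in> inc e}"
    unfolding is_walk_def by (auto dest: nth_mem)
qed

lemma euler_family_anchor_in_trail:
  assumes "euler_family V E inc F" and "(vs, es) \<in> F" and "i < length es"
    and "vs ! i = v \<or> vs ! Suc i = v"
  shows "v \<in> set vs"
proof -
  have "length vs = length es + 1"
    using assms(1,2) by (auto simp: euler_family_def closed_strict_trail_def is_walk_def)
  then show ?thesis using assms(3,4) by (auto intro: nth_mem)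
qed

lemma euler_family_anchored_edges_eq:
  assumes F: "euler_family V E inc F" and W: "(vs, es) \<in> F" "v \<in> set vs"
  shows "{e. anchor_of F v e} = nth es ` {i. i < length es \<and> (vs ! i = v \<or> vs ! Suc i = v)}"
proof
  show "nth es ` {i. i < length es \<and> (vs ! i = v \<or> vs ! Suc i = v)} \<subseteq> {e. anchor_of F v e}"
    using W(1) unfolding anchor_of_def by fastforce
next
  show "{e. anchor_of F v e} \<subseteq> nth es ` {i. i < length es \<and> (vs ! i = v \<or> vs ! Suc i = v)}"
  proof
    fix e assume "e \<in> {e. anchor_of F v e}"
    then obtain vs' es' i where i: "(vs', es') \<in> F" "i < length es'" "es' ! i = e"
        "vs' ! i = v \<or> vs' ! Suc i = v"
      unfolding anchor_of_def by blast
    have "v \<in> set vs'" using euler_family_anchor_in_trail[OF F i(1,2,4)] .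
    then have "(vs', es') = (vs, es)"
      using F W i(1) unfolding euler_family_def by fastforce
    with i show "e \<in> nth es ` {i. i < length es \<and> (vs ! i = v \<or> vs ! Suc i = v)}"
      by auto
  qed
qed

lemma euler_family_even_card_anchored_edges:
  assumes F: "euler_family V E inc F"
  shows "even (card {e. anchor_of F v e})"
proof (cases "\<exists>(vs, es)\<in>F. v \<in> set vs")
  case False
  then have "{e. anchor_of F v e} = {}"
    unfolding anchor_of_def by (auto dest: euler_family_anchor_in_trail[OF F])
  then show ?thesis by simp
next
  case True
  then obtain vs es where W: "(vs, es) \<in> F" "v \<in> set vs" by blast
  have trail: "closed_strict_trail V E inc vs es"
    using F W(1) by (auto simp: euler_family_def)
  define I where "I = {i. i < length es \<and> (vs ! i = v \<or> vs ! Suc i = v)}"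
  have "inj_on (nth es) I"
    using trail by (intro inj_on_nth) (auto simp: closed_strict_trail_def I_def)
  moreover have "even (card I)"
  proof -
    have "length vs = Suc (length es)" "vs \<noteq> []" "hd vs = last vs"
      "\<forall>i. Suc i < length vs \<longrightarrow> vs ! i \<noteq> vs ! Suc i"
      using trail by (auto simp: closed_strict_trail_def is_walk_def)
    then show ?thesis
      using even_card_closed_walk_incidences[of vs v] by (simp add: I_def)
  qed
  ultimately show ?thesis
    using euler_family_anchored_edges_eq[OF F W] by (simp add: I_def card_image)
qed

lemma euler_family_odd_degree_unanchored_edge:
  assumes F: "euler_family V E inc F" and "odd (hdegree E inc v)"
  obtains e where "e \<in> E" "v \<in> inc e" "\<not> anchor_of F v e"
proof -
  have "{e. anchor_of F v e} \<noteq> {e \<in> E. v \<in> inc e}"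
    using euler_family_even_card_anchored_edges[OF F, of v] assms(2)
    by (auto simp: hdegree_def)
  then show thesis
    using euler_family_anchored_edges_subset[OF F, of v] that by blast
qed

theorem corollary2p40:
  fixes V :: "'v set" and E :: "'e set" and inc :: "'e \<Rightarrow> 'v set"
  assumes "hypergraph V E inc"
    and "uniform3 E inc"
    and "quasi_eulerian V E inc"
    and "\<forall>v\<in>V. odd (hdegree E inc v)"
  shows "card V \<le> card E"
proof -
  obtain F where F: "euler_family V E inc F"
    using assms(3) by (auto simp: quasi_eulerian_def)
  have "finite E" using assms(1) by (simp add: hypergraph_def)
  define leftover where "leftover e = inc e - {v. anchor_of F v e}" for e
  have card_leftover: "card (leftover e) = 1" if "e \<in> E" for e
  proof -
    have "card (inc e) = 3" using assms(2) that by (simp add: uniform3_def)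
    moreover from this have "finite (inc e)" by (intro card_ge_0_finite) simp
    ultimately show ?thesis
      using euler_family_card_unanchored[OF F that] by (simp add: leftover_def)
  qed
  have "V \<subseteq> (\<Union>e\<in>E. leftover e)"
  proof
    fix v assume "v \<in> V"
    then obtain e where "e \<in> E" "v \<in> inc e" "\<not> anchor_of F v e"
      using euler_family_odd_degree_unanchored_edge[OF F] assms(4) by blast
    then show "v \<in> (\<Union>e\<in>E. leftover e)" by (auto simp: leftover_def)
  qed
  moreover have "finite (leftover e)" if "e \<in> E" for e
    using card_leftover[OF that] by (intro card_ge_0_finite) simp
  ultimately have "card V \<le> card (\<Union>e\<in>E. leftover e)"
    using \<open>finite E\<close> by (intro card_mono finite_UN_I) auto
  also have "\<dots> \<le> (\<Sum>e\<in>E. card (leftover e))"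
    using \<open>finite E\<close> by (rule card_UN_le)
  also have "\<dots> = card E"
    using card_leftover by simp
  finally show ?thesis .
qed

end
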